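(* Let $\{p_n\}_{n\geq1}$ be real numbers with $0<p_n<p_{n+1}$ for all $n\geq1$ and $\lim_{n\to\infty}p_n=\infty$. Then there exists a real solution $\lambda_*>0$ of the continued fraction equation $$\lambda p_1=\cfrac{1}{\lambda p_2-\cfrac{1}{\lambda p_3-\cfrac{1}{\lambda p_4-\cdots}}}$$ satisfying $$\frac{1}{\sqrt{p_1p_2}}<\lambda_*<\frac{1}{\sqrt{p_1p_2-p_1^2}},$$ and, with $\lambda=\lambda_*$, the sequence $\{c_n\}$ defined by $c_1=p_1$, $\eta_2=-\lambda_*p_1$, $\eta_{n+1}=-\lambda_*p_n-1/\eta_n$ for $n\geq2$, and $c_n=p_n\eta_n\eta_{n-1}\cdots\eta_2$ for $n\geq2$, decays exponentially fast for all sufficiently large $n$ and satisfies, for $s\geq 0$, $$\|n^sc_n\|_{\ell^2(\mathbb{N})}\leq C\Big(n_0^{s}+\frac{p_2}{p_1}\Big)\|c_n\|_{\ell^2(\mathbb{N})},$$ where $n_0$ is the largest integer with $p_{n_0}\leq4p_2$ and $C>0$ is a constant.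
   Context: The infinite continued fraction is understood as follows. For $n\geq2$ and $\lambda\geq 2/p_n$ let $G_n(\lambda)=\frac{\lambda p_n-\sqrt{\lambda^2p_n^2-4}}{2}$ (formally the continued fraction with all entries $\lambda p_n$). For $n\geq2$, $k\geq0$ let $F_{n,k}(\lambda)=\cfrac{1}{\lambda p_n-\cfrac{1}{\lambda p_{n+1}-\cdots\cfrac{1}{\lambda p_{n+k}-G_{n+k+1}(\lambda)}}}$, and $F_n(\lambda)=\lim_{k\to\infty}F_{n,k}(\lambda)$ where this limit exists; the equation is $\lambda p_1=F_2(\lambda)$. *)

theory Defs
  imports "HOL-Analysis.Analysis"
begin

text \<open>Sequences p are indexed from 1; the value p 0 is irrelevant.\<close>

text \<open>G_n(lambda): the formal continued fraction with all entries lambda p_n.\<close>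
definition cf_G :: "(nat \<Rightarrow> real) \<Rightarrow> real \<Rightarrow> nat \<Rightarrow> real" where
  "cf_G p l n = (l * p n - sqrt ((l * p n)^2 - 4)) / 2"

fun cf_F :: "(nat \<Rightarrow> real) \<Rightarrow> real \<Rightarrow> nat \<Rightarrow> nat \<Rightarrow> real" where
  "cf_F p l n 0 = 1 / (l * p n - cf_G p l (Suc n))"
| "cf_F p l n (Suc k) = 1 / (l * p n - cf_F p l (Suc n) k)"

definition cf_den :: "(nat \<Rightarrow> real) \<Rightarrow> real \<Rightarrow> nat \<Rightarrow> nat \<Rightarrow> real" where
  "cf_den p l n k = l * p n - (case k of 0 \<Rightarrow> cf_G p l (Suc n) | Suc k' \<Rightarrow> cf_F p l (Suc n) k')"

text \<open>F_{n,k}(lambda) is genuinely defined: the tail G_{n+k+1} is defined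
  (lambda >= 2/p_{n+k+1}) and no denominator vanishes.\<close>
definition cf_defined :: "(nat \<Rightarrow> real) \<Rightarrow> real \<Rightarrow> nat \<Rightarrow> nat \<Rightarrow> bool" where
  "cf_defined p l n k \<longleftrightarrow> 2 / p (n + k + 1) \<le> l \<and> (\<forall>j\<le>k. cf_den p l (n + j) (k - j) \<noteq> 0)"

definition cf_equation :: "(nat \<Rightarrow> real) \<Rightarrow> real \<Rightarrow> bool" where
  "cf_equation p l \<longleftrightarrow>
     (\<forall>\<^sub>F k in sequentially. cf_defined p l 2 k) \<and>
     ((\<lambda>k. cf_F p l 2 k) \<longlonglongrightarrow> l * p 1)"

text \<open>cf_eta p l k = eta_{k+2}: eta_2 = -l p_1, eta_{n+1} = -l p_n - 1/eta_n (n >= 2).\<close>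
fun cf_eta :: "(nat \<Rightarrow> real) \<Rightarrow> real \<Rightarrow> nat \<Rightarrow> real" where
  "cf_eta p l 0 = - l * p 1"
| "cf_eta p l (Suc k) = - l * p (k + 2) - 1 / cf_eta p l k"

text \<open>c_1 = p_1, c_n = p_n eta_n ... eta_2 for n >= 2 (c_0 unused, set to 0).\<close>
definition cf_c :: "(nat \<Rightarrow> real) \<Rightarrow> real \<Rightarrow> nat \<Rightarrow> real" where
  "cf_c p l n = (if n = 0 then 0 else if n = 1 then p 1
                 else p n * (\<Prod>j\<in>{2..n}. cf_eta p l (j - 2)))"

definition cf_n0 :: "(nat \<Rightarrow> real) \<Rightarrow> nat" where
  "cf_n0 p = Max {n. 1 \<le> n \<and> p n \<le> 4 * p 2}"

end

theory Submission
  imports Defs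
begin

text \<open>
  Write X_n(\<lambda>) for the continuants X_0 = 1, X_1 = \<lambda> p_1,
  X_{n+2} = \<lambda> p_{n+2} X_{n+1} - X_n. Their ratios r_n = X_{n+1} / X_n satisfy
  r_n = 1 / (\<lambda> p_{n+2} - r_{n+1}), and \<eta>_{n+2} = -r_n, so |c_{n+1}| = p_{n+1} X_n.
  Take \<lambda>_* to be the infimum of the \<lambda> > 0 at which all continuants are positive.
  By continuity all continuants are still positive at \<lambda>_*, and by minimality r_n \<le> 1 as
  soon as \<lambda>_* p_{n+2} > 2: otherwise the continuants would keep increasing also for slightly
  smaller \<lambda>. Hence r_n \<le> 1/3 once \<lambda>_* p_{n+2} \<ge> 4; from there on the truncated
  continued fractions are contractions converging geometrically to r_n, which gives
  F_2(\<lambda>_*) = r_0 = \<lambda>_* p_1. The lower bound for \<lambda>_* is X_2 > 0, the upper bound is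
  r_1 < r_0. Beyond n_0 the coefficients |c_n| shrink at least by the factor 3 in each step;
  this yields the exponential decay, and the weighted l^2 bound follows by weighting the
  first n_0 terms by at most n_0^s and dominating the tail by a geometric series.
\<close>

lemma cf_G_bounds:
  assumes "4 \<le> l * p n"
  shows "0 < cf_G p l n" "cf_G p l n \<le> 1/2"
proof -
  define a where "a = l * p n"
  have a4: "4 \<le> a" using assms a_def by simp
  have "sqrt (a\<^sup>2 - 4) < sqrt (a\<^sup>2)" using a4 by (intro real_sqrt_less_mono) simp
  then have "sqrt (a\<^sup>2 - 4) < a" using a4 by simp
  then show "0 < cf_G p l n" unfolding cf_G_def a_def[symmetric] by simp
  have "(a - 1)\<^sup>2 \<le> a\<^sup>2 - 4" using a4 by (simp add: power2_eq_square algebra_simps)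
  then have "a - 1 \<le> sqrt (a\<^sup>2 - 4)" by (intro real_le_rsqrt)
  then show "cf_G p l n \<le> 1/2" unfolding cf_G_def a_def[symmetric] by simp
qed

text \<open>One level of a continued fraction with entry \<open>a\<close> and two candidate tails \<open>t\<close>, \<open>r\<close>.\<close>
lemma inverse_diff_contraction:
  fixes a t r e :: real
  assumes "4 \<le> a" "0 < t" "t \<le> 1/2" "0 < r" "r \<le> 1/3" "\<bar>t - r\<bar> \<le> e"
  shows "3 \<le> a - t" "0 < 1 / (a - t)" "1 / (a - t) \<le> 1/2"
    and "\<bar>1 / (a - t) - 1 / (a - r)\<bar> \<le> e / 9"
proof -
  show t3: "3 \<le> a - t" and "0 < 1 / (a - t)" using assms by simp_all
  have r3: "3 \<le> a - r" using assms by simp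
  show "1 / (a - t) \<le> 1/2" using t3 by (simp add: divide_le_eq)
  have "9 \<le> (a - t) * (a - r)" using mult_mono[OF t3 r3] t3 by simp
  then have "\<bar>t - r\<bar> / ((a - t) * (a - r)) \<le> \<bar>t - r\<bar> / 9"
    by (intro divide_left_mono) auto
  also have "\<dots> \<le> e / 9" using assms(6) by simp
  also have "1 / (a - t) - 1 / (a - r) = (t - r) / ((a - t) * (a - r))"
    using t3 r3 by (simp add: field_simps)
  ultimately show "\<bar>1 / (a - t) - 1 / (a - r)\<bar> \<le> e / 9"
    using t3 r3 by (simp add: abs_divide abs_mult)
qed

lemma inverse_sqrt_less_iff:
  fixes l q :: real
  assumes "0 < l" "0 < q"
  shows "1 / sqrt q < l \<longleftrightarrow> 1 < l\<^sup>2 * q" and "l < 1 / sqrt q \<longleftrightarrow> l\<^sup>2 * q < 1"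
proof -
  have "l * sqrt q = sqrt (l\<^sup>2 * q)" using assms by (simp add: real_sqrt_mult)
  moreover have "1 / sqrt q < l \<longleftrightarrow> 1 < l * sqrt q" "l < 1 / sqrt q \<longleftrightarrow> l * sqrt q < 1"
    using assms by (simp_all add: divide_less_eq less_divide_eq)
  ultimately show "1 / sqrt q < l \<longleftrightarrow> 1 < l\<^sup>2 * q" "l < 1 / sqrt q \<longleftrightarrow> l\<^sup>2 * q < 1"
    by simp_all
qed

section \<open>Weighted square sums of geometrically decaying sequences\<close>

definition geometric_weight :: "real \<Rightarrow> nat \<Rightarrow> real" where
  "geometric_weight s j = (real (Suc j) powr s)\<^sup>2 / 9 ^ j"

lemma summable_geometric_weight: "summable (geometric_weight s)"
proof -
  define q where "q j = (real (Suc (Suc j)) / real (Suc j)) powr s" for j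
  have "(\<lambda>j. real (Suc (Suc j)) / real (Suc j)) \<longlonglongrightarrow> 1"
    using LIMSEQ_Suc[OF LIMSEQ_Suc_n_over_n] by simp
  then have "q \<longlonglongrightarrow> 1 powr s" unfolding q_def by (intro tendsto_intros) auto
  then have "\<forall>\<^sub>F j in sequentially. q j < 2" by (intro order_tendstoD) auto
  then obtain N where N: "\<And>j. N \<le> j \<Longrightarrow> q j < 2" unfolding eventually_sequentially by blast
  show ?thesis
  proof (rule summable_ratio_test[of "1/2" N])
    fix j assume "N \<le> j"
    then have "(q j)\<^sup>2 \<le> 2\<^sup>2" using N[of j] unfolding q_def by (intro power_mono) auto
    moreover have "real (Suc (Suc j)) powr s = q j * real (Suc j) powr s"
      unfolding q_def by (simp add: powr_divide)
    ultimately show "norm (geometric_weight s (Suc j)) \<le> 1/2 * norm (geometric_weight s j)"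
      unfolding geometric_weight_def by (simp add: power_mult_distrib divide_simps)
  qed simp
qed

definition moment_constant :: "real \<Rightarrow> real" where
  "moment_constant s = sqrt (1 + (2 powr s)\<^sup>2 * suminf (geometric_weight s))"

lemma moment_constant_pos: "0 < moment_constant s"
proof -
  have "0 \<le> suminf (geometric_weight s)"
    using summable_geometric_weight by (rule suminf_nonneg) (simp add: geometric_weight_def)
  then show ?thesis unfolding moment_constant_def by (simp add: add_pos_nonneg)
qed

lemma exponential_decay_of_geometric_tail:
  fixes a :: "nat \<Rightarrow> real"
  assumes "\<And>j. \<bar>a (N + j)\<bar> \<le> \<bar>a N\<bar> / 3 ^ j"
  shows "\<exists>K>0. \<exists>r. 0 < r \<and> r < 1 \<and> (\<exists>N. \<forall>n\<ge>N. \<bar>a n\<bar> \<le> K * r ^ n)"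
proof (intro exI conjI allI impI)
  show "0 < (\<bar>a N\<bar> + 1) * 3 ^ N" "(0::real) < 1/3" "(1/3::real) < 1" by simp_all
  fix n assume "N \<le> n"
  then obtain j where n: "n = N + j" using le_Suc_ex by blast
  have "\<bar>a n\<bar> \<le> \<bar>a N\<bar> / 3 ^ j" using assms n by simp
  also have "\<dots> \<le> (\<bar>a N\<bar> + 1) / 3 ^ j" by (simp add: divide_right_mono)
  also have "\<dots> = (\<bar>a N\<bar> + 1) * 3 ^ N * (1/3) ^ n" by (simp add: n power_add power_one_over)
  finally show "\<bar>a n\<bar> \<le> (\<bar>a N\<bar> + 1) * 3 ^ N * (1/3) ^ n" .
qed

lemma weighted_sq_le_geometric_weight:
  fixes a :: "nat \<Rightarrow> real"
  assumes "0 \<le> s" "1 \<le> N" and decay: "\<And>j. \<bar>a (N + j)\<bar> \<le> \<bar>a N\<bar> / 3 ^ j"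
  shows "(real (Suc (N + j)) powr s * a (N + j))\<^sup>2
           \<le> (2 powr s * real N powr s)\<^sup>2 * (a N)\<^sup>2 * geometric_weight s j"
proof -
  have "real (Suc (N + j)) \<le> 2 * real N * real (Suc j)"
  proof -
    have "Suc (N + j) \<le> 2 * N * Suc j" using \<open>1 \<le> N\<close> by (cases N) (auto simp: algebra_simps)
    then show ?thesis by (metis of_nat_le_iff of_nat_mult of_nat_numeral)
  qed
  then have "real (Suc (N + j)) powr s \<le> (2 * real N * real (Suc j)) powr s"
    using \<open>0 \<le> s\<close> by (intro powr_mono2) auto
  then have w: "real (Suc (N + j)) powr s \<le> 2 powr s * real N powr s * real (Suc j) powr s"
    by (simp add: powr_mult)
  have "\<bar>real (Suc (N + j)) powr s * a (N + j)\<bar>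
          \<le> (2 powr s * real N powr s * real (Suc j) powr s) * (\<bar>a N\<bar> / 3 ^ j)"
    unfolding abs_mult using w decay[of j] by (intro mult_mono) auto
  then have "(real (Suc (N + j)) powr s * a (N + j))\<^sup>2
               \<le> ((2 powr s * real N powr s * real (Suc j) powr s) * (\<bar>a N\<bar> / 3 ^ j))\<^sup>2"
    by (metis abs_ge_zero power2_abs power_mono)
  also have "\<dots> = (2 powr s * real N powr s)\<^sup>2 * (a N)\<^sup>2 * geometric_weight s j"
  proof -
    have "((3::real) ^ j)\<^sup>2 = 9 ^ j" by (simp add: power2_eq_square power_mult_distrib[symmetric])
    then show ?thesis
      unfolding geometric_weight_def by (simp add: power_mult_distrib power_divide mult_ac)
  qed
  finally show ?thesis .
qed

lemma summable_weighted_sq: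
  fixes a :: "nat \<Rightarrow> real"
  assumes "0 \<le> s" "1 \<le> N" "\<And>j. \<bar>a (N + j)\<bar> \<le> \<bar>a N\<bar> / 3 ^ j"
  shows "summable (\<lambda>n. (real (Suc n) powr s * a n)\<^sup>2)"
proof -
  define f where "f n = (real (Suc n) powr s * a n)\<^sup>2" for n
  have "summable (\<lambda>j. (2 powr s * real N powr s)\<^sup>2 * (a N)\<^sup>2 * geometric_weight s j)"
    using summable_geometric_weight by (rule summable_mult)
  moreover have "norm (f (j + N)) \<le> (2 powr s * real N powr s)\<^sup>2 * (a N)\<^sup>2 * geometric_weight s j"
    for j using weighted_sq_le_geometric_weight[OF assms, of j]
    unfolding f_def add.commute[of j N] by simp
  ultimately have "summable (\<lambda>j. f (j + N))"
    by (rule summable_comparison_test'[where N = 0])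
  then have "summable f" using summable_iff_shift[of f N] by simp
  then show ?thesis unfolding f_def .
qed

lemma weighted_l2_norm_le:
  fixes a :: "nat \<Rightarrow> real"
  assumes s: "0 \<le> s" and N: "1 \<le> N" and decay: "\<And>j. \<bar>a (N + j)\<bar> \<le> \<bar>a N\<bar> / 3 ^ j"
  shows "sqrt (\<Sum>n. (real (Suc n) powr s * a n)\<^sup>2)
           \<le> moment_constant s * real N powr s * sqrt (\<Sum>n. (a n)\<^sup>2)"
proof -
  define b where "b n = (real (Suc n) powr s * a n)\<^sup>2" for n
  define T where "T = (\<Sum>n. (a n)\<^sup>2)"
  define A where "A = suminf (geometric_weight s)"
  have summable_sq: "summable (\<lambda>n. (a n)\<^sup>2)"
    using summable_weighted_sq[OF order_refl N decay] by simp
  have A0: "0 \<le> A" unfolding A_def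
    using summable_geometric_weight by (rule suminf_nonneg) (simp add: geometric_weight_def)
  have T_initial: "(\<Sum>n<N. (a n)\<^sup>2) \<le> T" unfolding T_def
    using summable_sq by (intro sum_le_suminf) auto
  have T_single: "(a N)\<^sup>2 \<le> T" unfolding T_def
    using summable_sq sum_le_suminf[of "\<lambda>n. (a n)\<^sup>2" "{N}"] by simp
  have b: "summable b" unfolding b_def using summable_weighted_sq[OF s N decay] .
  then have b_shift: "summable (\<lambda>j. b (j + N))" by (subst summable_iff_shift)
  have "(\<Sum>j. b (j + N)) \<le> (\<Sum>j. (2 powr s * real N powr s)\<^sup>2 * (a N)\<^sup>2 * geometric_weight s j)"
    using weighted_sq_le_geometric_weight[OF s N decay] b_shift summable_geometric_weight
    unfolding b_def add.commute[of _ N] by (intro suminf_le allI summable_mult) auto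
  also have "\<dots> = (2 powr s * real N powr s)\<^sup>2 * (a N)\<^sup>2 * A"
    unfolding A_def using summable_geometric_weight by (rule suminf_mult)
  also have "\<dots> \<le> (2 powr s * real N powr s)\<^sup>2 * T * A"
    using T_single A0 by (intro mult_right_mono mult_left_mono) auto
  finally have tail: "(\<Sum>j. b (j + N)) \<le> (2 powr s * real N powr s)\<^sup>2 * T * A" .
  have "(\<Sum>n<N. b n) \<le> (\<Sum>n<N. (real N powr s)\<^sup>2 * (a n)\<^sup>2)"
  proof (rule sum_mono)
    fix n assume "n \<in> {..<N}"
    then have "real (Suc n) powr s \<le> real N powr s" using s by (intro powr_mono2) auto
    then show "b n \<le> (real N powr s)\<^sup>2 * (a n)\<^sup>2"
      unfolding b_def power_mult_distrib by (intro mult_right_mono power_mono) auto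
  qed
  also have "\<dots> \<le> (real N powr s)\<^sup>2 * T"
    using T_initial by (simp add: sum_distrib_left[symmetric] mult_left_mono)
  finally have initial: "(\<Sum>n<N. b n) \<le> (real N powr s)\<^sup>2 * T" .
  have "suminf b = (\<Sum>j. b (j + N)) + (\<Sum>n<N. b n)"
    using b by (rule suminf_split_initial_segment)
  also have "\<dots> \<le> (real N powr s)\<^sup>2 * (1 + (2 powr s)\<^sup>2 * A) * T"
    using tail initial by (simp add: power_mult_distrib algebra_simps)
  finally have "sqrt (suminf b) \<le> sqrt ((real N powr s)\<^sup>2 * (1 + (2 powr s)\<^sup>2 * A) * T)"
    by (rule real_sqrt_le_mono)
  then show ?thesis
    unfolding b_def T_def A_def moment_constant_def by (simp add: real_sqrt_mult mult_ac)
qed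

section \<open>Continuants and the minimal admissible parameter\<close>

fun continuant :: "(nat \<Rightarrow> real) \<Rightarrow> real \<Rightarrow> nat \<Rightarrow> real" where
  "continuant p l 0 = 1"
| "continuant p l (Suc 0) = l * p 1"
| "continuant p l (Suc (Suc n)) = l * p (n + 2) * continuant p l (Suc n) - continuant p l n"

lemma isCont_continuant: "isCont (\<lambda>l. continuant p l n) x"
  by (induction n rule: continuant.induct) (auto intro!: continuous_intros)

locale increasing_unbounded =
  fixes p :: "nat \<Rightarrow> real"
  assumes increasing: "\<forall>n\<ge>1. 0 < p n \<and> p n < p (Suc n)"
    and unbounded: "filterlim p at_top sequentially"
begin

lemma p_pos: "1 \<le> n \<Longrightarrow> 0 < p n"
  using increasing by auto

lemma p_mono:
  assumes "1 \<le> m" "m \<le> n"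
  shows "p m \<le> p n"
  using assms(2)
proof (induction n rule: dec_induct)
  case (step n)
  then show ?case using increasing assms(1) by (meson order.trans less_imp_le)
qed simp

lemma p_1_less_p_2: "p 1 < p 2"
  using increasing by (auto simp: numeral_2_eq_2)

lemma eventually_le_mult_p: "0 < l \<Longrightarrow> \<forall>\<^sub>F n in sequentially. c \<le> l * p n"
  using unbounded unfolding filterlim_at_top
  by (auto elim!: allE[of _ "c / l"] eventually_mono simp: divide_le_eq mult.commute)

lemma continuant_increasing:
  assumes "2 \<le> l * p (n + 2)" "continuant p l n \<le> continuant p l (Suc n)" "0 < continuant p l n"
    and "n \<le> m"
  shows "continuant p l m \<le> continuant p l (Suc m) \<and> 0 < continuant p l m"
  using \<open>n \<le> m\<close>
proof (induction m rule: dec_induct)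
  case base
  then show ?case using assms by simp
next
  case (step m)
  have "0 < l * p (n + 2)" using assms(1) by linarith
  then have "0 < l" using p_pos[of "n + 2"] by (simp add: zero_less_mult_iff)
  moreover have "p (n + 2) \<le> p (m + 2)" using p_mono[of "n + 2" "m + 2"] step(1) by simp
  ultimately have "l * p (n + 2) \<le> l * p (m + 2)" by simp
  then have "2 \<le> l * p (m + 2)" using assms(1) by linarith
  then have "2 * continuant p l (Suc m) \<le> l * p (m + 2) * continuant p l (Suc m)"
    using step.IH by (intro mult_right_mono) auto
  moreover have "continuant p l (Suc (Suc m)) = l * p (m + 2) * continuant p l (Suc m) - continuant p l m"
    by simp
  ultimately show ?case using step.IH by linarith
qed

definition admissible :: "real set" where
  "admissible = {l. 0 < l \<and> (\<forall>n. 0 < continuant p l n)}"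

lemma two_div_p_1_admissible: "2 / p 1 \<in> admissible"
proof -
  have p1: "0 < p 1" by (rule p_pos) simp
  have "2 \<le> 2 / p 1 * p 2" using p_1_less_p_2 p1 by (simp add: field_simps)
  then have "\<forall>m. 0 < continuant p (2 / p 1) m"
    using continuant_increasing[of "2 / p 1" 0] p1 by (simp add: numeral_2_eq_2)
  then show ?thesis using p1 by (simp add: admissible_def)
qed

lemma bdd_below_admissible: "bdd_below admissible"
  by (rule bdd_belowI[of _ 0]) (auto simp: admissible_def)

lemma admissible_if_continuant_increases:
  assumes "0 < l" "2 \<le> l * p (m + 2)" "continuant p l m < continuant p l (Suc m)"
    and "\<forall>k\<le>m. 0 < continuant p l k"
  shows "l \<in> admissible"
proof -
  have "0 < continuant p l k" for k
    using continuant_increasing[of l m k] assms by (cases "m \<le> k") auto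
  then show ?thesis using assms(1) by (simp add: admissible_def)
qed

lemma admissible_one_less_sq_p_1_p_2:
  assumes "l \<in> admissible"
  shows "1 < l\<^sup>2 * (p 1 * p 2)"
proof -
  have "0 < continuant p l 2" using assms by (simp add: admissible_def)
  moreover have "continuant p l 2 = l * p 2 * (l * p 1) - 1" by (simp add: numeral_2_eq_2)
  ultimately show ?thesis by (simp add: power2_eq_square algebra_simps)
qed

definition lam :: real where
  "lam = Inf admissible"

lemma lam_le_admissible:
  assumes "l \<in> admissible"
  shows "lam \<le> l"
  unfolding lam_def using assms bdd_below_admissible by (rule cInf_lower)

lemma lam_pos: "0 < lam"
proof -
  have "1 / sqrt (p 1 * p 2) \<le> lam"
    unfolding lam_def
  proof (rule cInf_greatest)
    show "admissible \<noteq> {}" using two_div_p_1_admissible by blast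
    fix l assume "l \<in> admissible"
    then show "1 / sqrt (p 1 * p 2) \<le> l"
      using admissible_one_less_sq_p_1_p_2 inverse_sqrt_less_iff(1)[of l "p 1 * p 2"] p_pos[of 1] p_pos[of 2]
      by (auto simp: admissible_def)
  qed
  moreover have "0 < 1 / sqrt (p 1 * p 2)" using p_pos[of 1] p_pos[of 2] by simp
  ultimately show ?thesis by linarith
qed

lemma continuant_lam_nonneg: "0 \<le> continuant p lam n"
proof -
  have "closed {l. 0 \<le> continuant p l n}"
    using isCont_continuant by (intro closed_Collect_le continuous_at_imp_continuous_on) auto
  moreover have "lam \<in> closure admissible"
    unfolding lam_def using two_div_p_1_admissible bdd_below_admissible
    by (intro closure_contains_Inf) auto
  moreover have "admissible \<subseteq> {l. 0 \<le> continuant p l n}"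
    by (auto simp: admissible_def less_imp_le)
  ultimately show ?thesis using closure_minimal by blast
qed

text \<open>Two consecutive vanishing continuants are impossible, and a single zero
  would force the next continuant to be negative.\<close>
lemma continuant_lam_pos: "0 < continuant p lam n"
proof -
  have "0 < continuant p lam n \<and> 0 < continuant p lam (Suc n)"
  proof (induction n)
    case 0
    then show ?case using lam_pos p_pos[of 1] by simp
  next
    case (Suc n)
    have "continuant p lam (Suc (Suc n)) \<noteq> 0"
      using Suc continuant_lam_nonneg[of "Suc (Suc (Suc n))"] by auto
    then show ?case using Suc continuant_lam_nonneg[of "Suc (Suc n)"] by simp
  qed
  then show ?thesis ..
qed

lemma lam_admissible: "lam \<in> admissible"
  using lam_pos continuant_lam_pos by (simp add: admissible_def)

text \<open>Minimality of \<open>lam\<close>: if the continuants increased at step \<open>m\<close>, they would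
  do so for every slightly smaller \<open>l\<close> as well, making that \<open>l\<close> admissible.\<close>
lemma continuant_lam_Suc_le:
  assumes "2 < lam * p (m + 2)"
  shows "continuant p lam (Suc m) \<le> continuant p lam m"
proof (rule ccontr)
  assume increase: "\<not> ?thesis"
  have lim: "((\<lambda>l. continuant p l k) \<longlongrightarrow> continuant p lam k) (at_left lam)" for k
    using isCont_continuant[where p = p and n = k and x = lam] by (simp add: isCont_def filterlim_at_split)
  have "\<forall>\<^sub>F l in at_left lam. 0 < continuant p l (Suc m) - continuant p l m"
    using increase by (intro order_tendstoD[OF tendsto_diff[OF lim lim]]) simp
  moreover have "\<forall>\<^sub>F l in at_left lam. \<forall>k\<in>{..m}. 0 < continuant p l k"
    using continuant_lam_pos by (intro eventually_ball_finite ballI order_tendstoD[OF lim]) auto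
  moreover have "\<forall>\<^sub>F l in at_left lam. 2 < l * p (m + 2)"
  proof -
    have "((\<lambda>l. l * p (m + 2)) \<longlongrightarrow> lam * p (m + 2)) (at_left lam)"
      by (intro tendsto_intros)
    then show ?thesis using assms by (rule order_tendstoD)
  qed
  moreover have "\<forall>\<^sub>F l in at_left lam. l \<in> {0<..<lam}"
    using lam_pos by (rule eventually_at_left_real)
  ultimately have "\<forall>\<^sub>F l in at_left lam. l \<in> admissible \<and> l < lam"
    by eventually_elim (auto intro!: admissible_if_continuant_increases)
  then obtain l where "l \<in> admissible" "l < lam"
    using eventually_happens by fastforce
  then show False using lam_le_admissible by fastforce
qed

definition ratio :: "nat \<Rightarrow> real" where
  "ratio n = continuant p lam (Suc n) / continuant p lam n"

lemma ratio_pos: "0 < ratio n"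
  unfolding ratio_def using continuant_lam_pos by simp

lemma ratio_0: "ratio 0 = lam * p 1"
  by (simp add: ratio_def)

lemma ratio_Suc: "ratio (Suc n) = lam * p (n + 2) - 1 / ratio n"
  unfolding ratio_def using continuant_lam_pos[of n] continuant_lam_pos[of "Suc n"]
  by (simp add: field_simps)

lemma inverse_ratio: "1 / ratio n = lam * p (n + 2) - ratio (Suc n)"
  using ratio_Suc[of n] by simp

lemma ratio_eq_inverse: "ratio n = 1 / (lam * p (n + 2) - ratio (Suc n))"
  unfolding inverse_ratio[symmetric] by simp

lemma ratio_le_1: "2 < lam * p (n + 2) \<Longrightarrow> ratio n \<le> 1"
  using continuant_lam_Suc_le[of n] continuant_lam_pos[of n] by (simp add: ratio_def)

lemma lam_p_mono: "1 \<le> m \<Longrightarrow> m \<le> n \<Longrightarrow> lam * p m \<le> lam * p n"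
  using p_mono lam_pos by (simp add: mult_left_mono)

lemma ratio_le_third:
  assumes "4 \<le> lam * p (n + 2)"
  shows "ratio n \<le> 1/3"
proof -
  have "ratio (Suc n) \<le> 1" using assms lam_p_mono[of "n + 2" "Suc n + 2"] by (intro ratio_le_1) simp
  then have "3 \<le> lam * p (n + 2) - ratio (Suc n)" using assms by linarith
  then show ?thesis using ratio_eq_inverse[of n] by (simp add: divide_le_eq)
qed

lemma cf_eta_eq_ratio: "cf_eta p lam n = - ratio n"
  by (induction n) (simp_all add: ratio_0 ratio_Suc add.commute)

lemma prod_cf_eta: "(\<Prod>j\<in>{2..n + 2}. cf_eta p lam (j - 2)) = (-1) ^ (n + 1) * continuant p lam (n + 1)"
proof (induction n)
  case 0
  then show ?case by (simp add: cf_eta_eq_ratio ratio_0)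
next
  case (Suc n)
  have "(\<Prod>j\<in>{2..Suc n + 2}. cf_eta p lam (j - 2))
          = cf_eta p lam (n + 1) * (\<Prod>j\<in>{2..n + 2}. cf_eta p lam (j - 2))"
    by (simp add: prod.cl_ivl_Suc del: cf_eta.simps)
  also have "\<dots> = - ratio (n + 1) * ((-1) ^ (n + 1) * continuant p lam (n + 1))"
    unfolding Suc.IH cf_eta_eq_ratio[of "n + 1"] ..
  also have "\<dots> = (-1) ^ (Suc n + 1) * (ratio (n + 1) * continuant p lam (n + 1))"
    by simp
  also have "ratio (n + 1) * continuant p lam (n + 1) = continuant p lam (Suc n + 1)"
    unfolding ratio_def using continuant_lam_pos[of "n + 1"] by simp
  finally show ?case .
qed

lemma cf_c_Suc: "cf_c p lam (Suc n) = (-1) ^ n * p (Suc n) * continuant p lam n"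
proof (cases n)
  case (Suc m)
  then show ?thesis using prod_cf_eta[of m] by (simp add: cf_c_def)
qed (simp add: cf_c_def)

lemma abs_cf_c_Suc: "\<bar>cf_c p lam (Suc n)\<bar> = p (Suc n) * continuant p lam n"
  using p_pos[of "Suc n"] continuant_lam_pos[of n] by (simp add: cf_c_Suc abs_mult)

lemma incseq_ratio_if:
  assumes "ratio 0 \<le> ratio 1"
  shows "incseq ratio"
proof (rule incseq_SucI)
  fix n show "ratio n \<le> ratio (Suc n)"
  proof (induction n)
    case (Suc n)
    have "lam * p (n + 2) \<le> lam * p (Suc n + 2)" by (intro lam_p_mono) auto
    moreover have "1 / ratio (Suc n) \<le> 1 / ratio n" using Suc ratio_pos[of n] by (simp add: frac_le)
    ultimately show ?case using ratio_Suc[of "Suc n"] ratio_Suc[of n] by (simp add: add.commute)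
  qed (use assms in simp)
qed

text \<open>As soon as \<open>lam p_{N+2} \<ge> 4 + 1/(lam p_1)\<close>, \<open>ratio N < ratio 0 = lam p_1\<close>,
  so the ratios are not increasing.\<close>
lemma ratio_1_less_ratio_0: "ratio 1 < ratio 0"
proof (rule ccontr)
  assume "\<not> ?thesis"
  then have mono: "incseq ratio" by (intro incseq_ratio_if) simp
  have a: "0 < lam * p 1" using lam_pos p_pos[of 1] by simp
  obtain N where N: "\<And>n. N \<le> n \<Longrightarrow> 4 + 1 / (lam * p 1) \<le> lam * p n"
    using eventually_le_mult_p[OF lam_pos] unfolding eventually_sequentially by blast
  have "0 < 1 / (lam * p 1)" using a by simp
  then have "ratio (Suc N) \<le> 1"
    using N[of "Suc N + 2"] by (intro ratio_le_1) linarith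
  then have "1 / ratio 0 < 1 / ratio N"
    unfolding inverse_ratio ratio_0 using N[of "N + 2"] by linarith
  then have "ratio N < ratio 0" using ratio_pos[of 0] ratio_pos[of N] by (simp add: field_simps)
  moreover have "ratio 0 \<le> ratio N" using mono by (simp add: incseq_def)
  ultimately show False by simp
qed

lemma lam_gt_inverse_sqrt: "1 / sqrt (p 1 * p 2) < lam"
  using admissible_one_less_sq_p_1_p_2[OF lam_admissible] inverse_sqrt_less_iff(1) lam_pos p_pos[of 1] p_pos[of 2]
  by simp

lemma lam_less_inverse_sqrt: "lam < 1 / sqrt (p 1 * p 2 - (p 1)\<^sup>2)"
proof -
  have a: "0 < lam * p 1" using lam_pos p_pos[of 1] by simp
  have "lam * p 2 - 1 / (lam * p 1) < lam * p 1"
    using ratio_1_less_ratio_0 ratio_Suc[of 0] ratio_0 by (simp add: numeral_2_eq_2)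
  then have "(lam * p 2 - 1 / (lam * p 1)) * (lam * p 1) < lam * p 1 * (lam * p 1)"
    using a by (rule mult_strict_right_mono)
  then have "lam * p 2 * (lam * p 1) - 1 < lam * p 1 * (lam * p 1)"
    using a lam_pos p_pos[of 1] by (simp add: left_diff_distrib)
  then have "lam\<^sup>2 * (p 1 * p 2 - (p 1)\<^sup>2) < 1" by (simp add: power2_eq_square algebra_simps)
  moreover have "0 < p 1 * p 2 - (p 1)\<^sup>2"
    using p_1_less_p_2 p_pos[of 1] by (simp add: power2_eq_square)
  ultimately show ?thesis using inverse_sqrt_less_iff(2) lam_pos by blast
qed

section \<open>Convergence of the continued fraction\<close>

lemma cf_F_tail_bounds:
  assumes "\<forall>j\<ge>n + 2. 4 \<le> lam * p j"
  shows "0 < cf_F p lam (n + 2) k \<and> cf_F p lam (n + 2) k \<le> 1/2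
    \<and> \<bar>cf_F p lam (n + 2) k - ratio n\<bar> \<le> (1/6) ^ (k + 1) \<and> 3 \<le> cf_den p lam (n + 2) k"
  using assms
proof (induction k arbitrary: n)
  case 0
  have a: "4 \<le> lam * p (n + 2)" using 0 by simp
  have g: "0 < cf_G p lam (Suc n + 2)" "cf_G p lam (Suc n + 2) \<le> 1/2"
    using 0 by (intro cf_G_bounds; simp)+
  have "4 \<le> lam * p (Suc n + 2)" using 0 by simp
  then have r: "0 < ratio (Suc n)" "ratio (Suc n) \<le> 1/3" using ratio_pos ratio_le_third by blast+
  then have "\<bar>cf_G p lam (Suc n + 2) - ratio (Suc n)\<bar> \<le> 1/2" using g unfolding abs_le_iff by linarith
  from inverse_diff_contraction[OF a g r this] show ?case
    unfolding ratio_eq_inverse[of n] by (simp add: cf_den_def)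
next
  case (Suc k)
  have a: "4 \<le> lam * p (n + 2)" using Suc.prems by simp
  have "4 \<le> lam * p (Suc n + 2)" using Suc.prems by simp
  then have r: "0 < ratio (Suc n)" "ratio (Suc n) \<le> 1/3" using ratio_pos ratio_le_third by blast+
  have IH: "0 < cf_F p lam (Suc n + 2) k" "cf_F p lam (Suc n + 2) k \<le> 1/2"
    "\<bar>cf_F p lam (Suc n + 2) k - ratio (Suc n)\<bar> \<le> (1/6) ^ (k + 1)"
    using Suc.IH[of "Suc n"] Suc.prems by auto
  note step = inverse_diff_contraction[OF a IH(1,2) r IH(3)]
  have "\<bar>1 / (lam * p (n + 2) - cf_F p lam (Suc n + 2) k) - 1 / (lam * p (n + 2) - ratio (Suc n))\<bar>
          \<le> (1/6) ^ (Suc k + 1)"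
    using step(4) by (rule order_trans) simp
  with step(1-3) show ?case unfolding ratio_eq_inverse[of n] by (simp add: cf_den_def)
qed

lemma cf_F_tendsto_ratio_step:
  assumes "(\<lambda>k. cf_F p lam (Suc n + 2) k) \<longlonglongrightarrow> ratio (Suc n)"
  shows "(\<lambda>k. cf_F p lam (n + 2) k) \<longlonglongrightarrow> ratio n"
proof -
  have "(\<lambda>k. 1 / (lam * p (n + 2) - cf_F p lam (Suc n + 2) k))
          \<longlonglongrightarrow> 1 / (lam * p (n + 2) - ratio (Suc n))"
    using inverse_ratio[of n] ratio_pos[of n] by (intro tendsto_intros assms) auto
  then have "(\<lambda>k. cf_F p lam (n + 2) (Suc k)) \<longlonglongrightarrow> ratio n"
    unfolding ratio_eq_inverse[of n] by simp
  then show ?thesis by (rule filterlim_sequentially_Suc[THEN iffD1])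
qed

lemma cf_F_tendsto_ratio: "(\<lambda>k. cf_F p lam (n + 2) k) \<longlonglongrightarrow> ratio n"
proof -
  obtain N where N: "\<And>j. N \<le> j \<Longrightarrow> 4 \<le> lam * p j"
    using eventually_le_mult_p[OF lam_pos] unfolding eventually_sequentially by blast
  have tail: "(\<lambda>k. cf_F p lam (n + 2) k) \<longlonglongrightarrow> ratio n" if "N \<le> n" for n
  proof (rule LIM_zero_cancel, rule Lim_null_comparison)
    have "\<forall>j\<ge>n + 2. 4 \<le> lam * p j" using N that by simp
    then show "\<forall>\<^sub>F k in sequentially. norm (cf_F p lam (n + 2) k - ratio n) \<le> (1/6) ^ (k + 1)"
      using cf_F_tail_bounds by (intro always_eventually allI) simp
    show "(\<lambda>k. (1/6::real) ^ (k + 1)) \<longlonglongrightarrow> 0"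
      using LIMSEQ_Suc[OF LIMSEQ_power_zero[of "1/6::real"]] by simp
  qed
  show ?thesis
  proof (cases "N \<le> n")
    case False
    then have "n \<le> N" by simp
    then show ?thesis
    proof (induction n rule: inc_induct)
      case base
      show ?case by (rule tail) simp
    next
      case (step n)
      show ?case using step.IH by (rule cf_F_tendsto_ratio_step)
    qed
  qed (rule tail)
qed

lemma cf_den_eventually_pos: "\<forall>\<^sub>F k in sequentially. 0 < cf_den p lam (n + 2) k"
proof -
  have "(\<lambda>k. lam * p (n + 2) - cf_F p lam (Suc n + 2) k) \<longlonglongrightarrow> lam * p (n + 2) - ratio (Suc n)"
    by (intro tendsto_intros cf_F_tendsto_ratio)
  moreover have "0 < lam * p (n + 2) - ratio (Suc n)"
    unfolding inverse_ratio[symmetric] using ratio_pos[of n] by simp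
  ultimately have "\<forall>\<^sub>F k in sequentially. 0 < lam * p (n + 2) - cf_F p lam (Suc n + 2) k"
    by (rule order_tendstoD)
  then have "\<forall>\<^sub>F k in sequentially. 0 < cf_den p lam (n + 2) (Suc k)"
    by eventually_elim (simp add: cf_den_def)
  then show ?thesis by (rule eventually_sequentially_Suc[THEN iffD1])
qed

lemma cf_equation_lam: "cf_equation p lam"
proof -
  obtain N where N: "\<And>j. N \<le> j \<Longrightarrow> 4 \<le> lam * p j"
    using eventually_le_mult_p[OF lam_pos] unfolding eventually_sequentially by blast
  have "2 / p (2 + k + 1) \<le> lam" if "N \<le> k" for k
    using N[of "2 + k + 1"] p_pos[of "2 + k + 1"] that by (simp add: divide_le_eq mult.commute)
  then have "\<forall>\<^sub>F k in sequentially. 2 / p (2 + k + 1) \<le> lam"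
    unfolding eventually_sequentially by blast
  moreover have "\<forall>\<^sub>F k in sequentially. \<forall>j\<in>{..<N}. j \<le> k \<longrightarrow> cf_den p lam (2 + j) (k - j) \<noteq> 0"
  proof (intro eventually_ball_finite ballI)
    fix j
    obtain K where K: "\<And>k. K \<le> k \<Longrightarrow> 0 < cf_den p lam (j + 2) k"
      using cf_den_eventually_pos[of j] unfolding eventually_sequentially by blast
    have "j \<le> k \<longrightarrow> cf_den p lam (2 + j) (k - j) \<noteq> 0" if "K + j \<le> k" for k
    proof -
      have "K \<le> k - j" using that by arith
      then show ?thesis using K[of "k - j"] by (simp add: add.commute)
    qed
    then show "\<forall>\<^sub>F k in sequentially. j \<le> k \<longrightarrow> cf_den p lam (2 + j) (k - j) \<noteq> 0"
      unfolding eventually_sequentially by blast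
  qed simp
  ultimately have "\<forall>\<^sub>F k in sequentially. cf_defined p lam 2 k"
    unfolding cf_defined_def
  proof eventually_elim
    case (elim k)
    have "cf_den p lam (2 + j) (k - j) \<noteq> 0" if "N \<le> j" for j
      using cf_F_tail_bounds[of j "k - j"] N that by (simp add: add.commute)
    then show ?case using elim by (meson lessThan_iff not_le)
  qed
  moreover have "(\<lambda>k. cf_F p lam 2 k) \<longlonglongrightarrow> lam * p 1"
    using cf_F_tendsto_ratio[of 0] unfolding ratio_0 by (simp add: numeral_2_eq_2)
  ultimately show ?thesis unfolding cf_equation_def ..
qed

section \<open>Decay of the coefficients\<close>

lemma finite_p_le: "finite {n. 1 \<le> n \<and> p n \<le> c}"
proof -
  obtain N where N: "\<And>n. N \<le> n \<Longrightarrow> c + 1 \<le> p n"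
    using unbounded unfolding filterlim_at_top eventually_sequentially by blast
  have "{n. 1 \<le> n \<and> p n \<le> c} \<subseteq> {..<N}"
  proof
    fix n assume "n \<in> {n. 1 \<le> n \<and> p n \<le> c}"
    then show "n \<in> {..<N}" using N[of n] by (cases "N \<le> n") auto
  qed
  then show ?thesis by (rule finite_subset) simp
qed

lemma two_le_cf_n0: "2 \<le> cf_n0 p"
  unfolding cf_n0_def using finite_p_le p_pos[of 2] by (intro Max_ge) auto

lemma p_gt_beyond_cf_n0:
  assumes "cf_n0 p < n"
  shows "4 * p 2 < p n"
proof (rule ccontr)
  assume "\<not> ?thesis"
  then have "n \<le> cf_n0 p" unfolding cf_n0_def
    using assms two_le_cf_n0 finite_p_le by (intro Max_ge) auto
  then show False using assms by simp
qed

lemma one_less_lam_p_2: "1 < lam * p 2"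
proof (rule ccontr)
  assume "\<not> ?thesis"
  then have le: "lam * p 2 \<le> 1" by simp
  have p12: "lam * p 1 \<le> lam * p 2" "0 \<le> lam * p 1" using lam_p_mono[of 1 2] lam_pos p_pos[of 1] by auto
  have "lam * p 1 * (lam * p 2) \<le> 1" by (rule mult_le_one) (use le p12 in linarith)+
  then show False
    using admissible_one_less_sq_p_1_p_2[OF lam_admissible] by (simp add: power2_eq_square algebra_simps)
qed

lemma four_less_lam_p_beyond_cf_n0:
  assumes "cf_n0 p < n"
  shows "4 < lam * p n"
proof -
  have "lam * (4 * p 2) < lam * p n" using p_gt_beyond_cf_n0[OF assms] lam_pos by simp
  then show ?thesis using one_less_lam_p_2 by simp
qed

lemma p_mult_ratio_le:
  assumes "4 \<le> lam * p (n + 1)"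
  shows "p (n + 2) * ratio n \<le> p (n + 1) / 3"
proof -
  define D where "D = lam * p (n + 2) - ratio (Suc n)"
  have p: "0 < p (n + 1)" "p (n + 1) \<le> p (n + 2)" using p_pos p_mono by auto
  have "ratio (Suc n) \<le> 1"
    using assms lam_p_mono[of "n + 1" "Suc n + 2"] by (intro ratio_le_1) simp
  then have D_ge: "lam * p (n + 2) - 1 \<le> D" unfolding D_def by simp
  have "3 * p (n + 2) \<le> lam * p (n + 1) * p (n + 2) - p (n + 1)"
    using mult_right_mono[OF assms, of "p (n + 2)"] p by linarith
  also have "\<dots> = p (n + 1) * (lam * p (n + 2) - 1)" by (simp add: algebra_simps)
  also have "\<dots> \<le> p (n + 1) * D" using D_ge p by (intro mult_left_mono) auto
  finally have "3 * p (n + 2) \<le> p (n + 1) * D" .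
  moreover have "0 < D" unfolding D_def inverse_ratio[symmetric] using ratio_pos[of n] by simp
  ultimately have "3 * p (n + 2) / D \<le> p (n + 1)" by (simp add: divide_le_eq mult.commute)
  moreover have "ratio n = 1 / D" unfolding D_def by (rule ratio_eq_inverse)
  ultimately show ?thesis by (simp add: mult.commute)
qed

lemma abs_cf_c_contraction:
  assumes "4 \<le> lam * p (n + 1)"
  shows "\<bar>cf_c p lam (n + 2)\<bar> \<le> \<bar>cf_c p lam (Suc n)\<bar> / 3"
proof -
  have "\<bar>cf_c p lam (n + 2)\<bar> = p (n + 2) * ratio n * continuant p lam n"
    using abs_cf_c_Suc[of "Suc n"] continuant_lam_pos[of n] by (simp add: ratio_def)
  also have "\<dots> \<le> p (n + 1) / 3 * continuant p lam n"
    using p_mult_ratio_le[OF assms] continuant_lam_pos[of n] by (intro mult_right_mono) auto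
  also have "\<dots> = \<bar>cf_c p lam (Suc n)\<bar> / 3" by (simp add: abs_cf_c_Suc)
  finally show ?thesis .
qed

lemma abs_cf_c_geometric_decay:
  "\<bar>cf_c p lam (Suc (cf_n0 p + j))\<bar> \<le> \<bar>cf_c p lam (Suc (cf_n0 p))\<bar> / 3 ^ j"
proof (induction j)
  case (Suc j)
  have "4 \<le> lam * p (cf_n0 p + j + 1)"
    using four_less_lam_p_beyond_cf_n0[of "cf_n0 p + j + 1"] by simp
  then have "\<bar>cf_c p lam (Suc (cf_n0 p + Suc j))\<bar> \<le> \<bar>cf_c p lam (Suc (cf_n0 p + j))\<bar> / 3"
    using abs_cf_c_contraction[of "cf_n0 p + j"] by simp
  also have "\<dots> \<le> \<bar>cf_c p lam (Suc (cf_n0 p))\<bar> / 3 ^ Suc j"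
    using Suc.IH by (simp add: divide_right_mono)
  finally show ?case .
qed simp

lemma cf_c_exponential_decay:
  "\<exists>K>0. \<exists>r. 0 < r \<and> r < 1 \<and> (\<exists>N. \<forall>n\<ge>N. \<bar>cf_c p lam n\<bar> \<le> K * r ^ n)"
  using abs_cf_c_geometric_decay by (intro exponential_decay_of_geometric_tail[where N = "Suc (cf_n0 p)"]) simp

lemma summable_weighted_cf_c:
  "0 \<le> s \<Longrightarrow> summable (\<lambda>n. (real (Suc n) powr s * cf_c p lam (Suc n))\<^sup>2)"
  using two_le_cf_n0 abs_cf_c_geometric_decay by (intro summable_weighted_sq[where N = "cf_n0 p"]) auto

lemma weighted_l2_norm_cf_c_le:
  assumes "0 \<le> s"
  shows "sqrt (\<Sum>n. (real (Suc n) powr s * cf_c p lam (Suc n))\<^sup>2)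
    \<le> moment_constant s * (real (cf_n0 p) powr s + p 2 / p 1) * sqrt (\<Sum>n. (cf_c p lam (Suc n))\<^sup>2)"
proof -
  have "sqrt (\<Sum>n. (real (Suc n) powr s * cf_c p lam (Suc n))\<^sup>2)
      \<le> moment_constant s * real (cf_n0 p) powr s * sqrt (\<Sum>n. (cf_c p lam (Suc n))\<^sup>2)"
    using two_le_cf_n0 abs_cf_c_geometric_decay by (intro weighted_l2_norm_le[where N = "cf_n0 p"] assms) auto
  also have "\<dots> \<le> moment_constant s * (real (cf_n0 p) powr s + p 2 / p 1)
      * sqrt (\<Sum>n. (cf_c p lam (Suc n))\<^sup>2)"
    using moment_constant_pos[of s] p_pos[of 1] p_pos[of 2] summable_weighted_cf_c[of 0]
    by (intro mult_right_mono mult_left_mono real_sqrt_ge_zero suminf_nonneg) auto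
  finally show ?thesis .
qed

end

theorem theorem2p2:
  "\<exists>C :: real \<Rightarrow> real. (\<forall>s\<ge>0. C s > 0) \<and>
    (\<forall>p :: nat \<Rightarrow> real.
       (\<forall>n\<ge>1. 0 < p n \<and> p n < p (Suc n)) \<and> filterlim p at_top sequentially \<longrightarrow>
       (\<exists>l. l > 0 \<and> cf_equation p l \<and>
            1 / sqrt (p 1 * p 2) < l \<and> l < 1 / sqrt (p 1 * p 2 - (p 1)^2) \<and>
            (\<exists>K > 0. \<exists>r. 0 < r \<and> r < 1 \<and>
               (\<exists>N. \<forall>n\<ge>N. \<bar>cf_c p l n\<bar> \<le> K * r ^ n)) \<and>
            (\<forall>s\<ge>0.
               summable (\<lambda>n. (real (Suc n) powr s * cf_c p l (Suc n))^2) \<and>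
               sqrt (\<Sum>n. (real (Suc n) powr s * cf_c p l (Suc n))^2)
                 \<le> C s * (real (cf_n0 p) powr s + p 2 / p 1)
                       * sqrt (\<Sum>n. (cf_c p l (Suc n))^2))))"
proof (intro exI[of _ moment_constant] conjI allI impI moment_constant_pos, goal_cases)
  case (1 p)
  then interpret increasing_unbounded p by unfold_locales auto
  show ?case
    by (intro exI[of _ lam] conjI allI impI lam_pos cf_equation_lam lam_gt_inverse_sqrt
        lam_less_inverse_sqrt cf_c_exponential_decay summable_weighted_cf_c weighted_l2_norm_cf_c_le)
qed

end
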